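(* $c(9)\ge 6$.
   Context: $\mathbb{F}_q$ is the finite field with $q$ elements. Hamming distance $d(u,v)=|\{i:u_i\ne v_i\}|$ on $\mathbb{F}_q^3$; $B(u)=\{v:d(u,v)\le1\}$; $E(u)=\bigcup_{\lambda\in\mathbb{F}_q}B(\lambda u)$. A set $\mathcal{H}\subseteq\mathbb{F}_q^3$ is a short covering if $\bigcup_{h\in\mathcal{H}}E(h)=\mathbb{F}_q^3$; $c(q)$ is the minimum cardinality of a short covering of $\mathbb{F}_q^3$. *)

theory Defs
  imports Main
begin

definition hamming :: "'a \<times> 'a \<times> 'a \<Rightarrow> 'a \<times> 'a \<times> 'a \<Rightarrow> nat" where
  "hamming u v = card {i::nat. i < 3 \<and> [fst u, fst (snd u), snd (snd u)] ! i \<noteq> [fst v, fst (snd v), snd (snd v)] ! i}"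

definition ball1 :: "'a \<times> 'a \<times> 'a \<Rightarrow> ('a \<times> 'a \<times> 'a) set" where
  "ball1 u = {v. hamming u v \<le> 1}"

definition smul3 :: "'a::times \<Rightarrow> 'a \<times> 'a \<times> 'a \<Rightarrow> 'a \<times> 'a \<times> 'a" where
  "smul3 c u = (c * fst u, c * fst (snd u), c * snd (snd u))"

definition Ext :: "'a::field \<times> 'a \<times> 'a \<Rightarrow> ('a \<times> 'a \<times> 'a) set" where
  "Ext u = (\<Union>c. ball1 (smul3 c u))"

definition short_covering :: "('a::field \<times> 'a \<times> 'a) set \<Rightarrow> bool" where
  "short_covering H \<longleftrightarrow> (\<Union>h\<in>H. Ext h) = UNIV"

end

theory Submission
  imports Defs
begin

text \<open>For a vector h and a pair of coordinates in which h is nonzero, call the ratio of these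
  coordinates a slope of h. The point (1, s, s u) with s, u \<noteq> 0 lies in E(h) only if s, u or s u is
  the slope of h in the corresponding pair, so a short covering H gives three slope sets A, C, B of
  nonzero elements such that no s \<notin> A, u \<notin> C has s u \<notin> B. Each slope set has at most |H|
  elements. If |H| < q - 1, covering the points (1, s, 0) forces H to contain, for every
  coordinate plane, a vector on it that is not zero; at least two of these vectors are distinct,
  and a vector with a zero coordinate has at most one slope, so |A| + |B| + |C| \<le> 3|H| - 4. If
  this sum is less than 3(q - 1)/2, two of the slope sets together miss some nonzero element, and
  a pair s, u as above can be chosen by avoiding fewer than q - 1 values at a time. For q = 9 this excludes |H| \<le> 5.\<close>

text \<open>With x, y, z the three coordinate functions this is short_covering; keeping them abstract
  lets one argument serve all three coordinate planes.\<close>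

definition covers_in_two_coords ::
    "'b set \<Rightarrow> ('b \<Rightarrow> 'a::times) \<Rightarrow> ('b \<Rightarrow> 'a) \<Rightarrow> ('b \<Rightarrow> 'a) \<Rightarrow> bool" where
  "covers_in_two_coords H x y z \<longleftrightarrow>
     (\<forall>a b d. \<exists>h\<in>H. \<exists>c. (c * x h = a \<and> c * y h = b) \<or> (c * x h = a \<and> c * z h = d)
                        \<or> (c * y h = b \<and> c * z h = d))"

definition slopes :: "'b set \<Rightarrow> ('b \<Rightarrow> 'a::field) \<Rightarrow> ('b \<Rightarrow> 'a) \<Rightarrow> 'a set" where
  "slopes H x y = (\<lambda>h. y h / x h) ` {h \<in> H. x h \<noteq> 0 \<and> y h \<noteq> 0}"

lemma hamming_le_1_iff:
  "hamming (a1, a2, a3) (b1, b2, b3) \<le> 1 \<longleftrightarrow>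
     (a1 = b1 \<and> a2 = b2) \<or> (a1 = b1 \<and> a3 = b3) \<or> (a2 = b2 \<and> a3 = b3)"
proof -
  have "{i::nat. i < 3 \<and> P i} =
          (if P 0 then {0} else {}) \<union> (if P 1 then {1} else {}) \<union> (if P 2 then {2} else {})"
    for P :: "nat \<Rightarrow> bool"
  proof (rule set_eqI)
    fix i :: nat
    show "i \<in> {i. i < 3 \<and> P i} \<longleftrightarrow>
        i \<in> (if P 0 then {0} else {}) \<union> (if P 1 then {1} else {}) \<union> (if P 2 then {2} else {})"
      by (cases "i = 0"; cases "i = 1"; cases "i = 2") auto
  qed
  then show ?thesis
    unfolding hamming_def by auto
qed

lemma short_covering_covers_in_two_coords:
  assumes "short_covering H"
  shows "covers_in_two_coords H fst (\<lambda>h. fst (snd h)) (\<lambda>h. snd (snd h))"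
  unfolding covers_in_two_coords_def
proof (intro allI)
  fix a b d
  from assms obtain h c where "h \<in> H" "(a, b, d) \<in> ball1 (smul3 c h)"
    unfolding short_covering_def Ext_def by blast
  moreover obtain h1 h2 h3 where "h = (h1, h2, h3)"
    by (cases h)
  ultimately have "(c * h1 = a \<and> c * h2 = b) \<or> (c * h1 = a \<and> c * h3 = d) \<or> (c * h2 = b \<and> c * h3 = d)"
    by (simp add: ball1_def smul3_def hamming_le_1_iff[simplified])
  with \<open>h \<in> H\<close> \<open>h = (h1, h2, h3)\<close>
  show "\<exists>h\<in>H. \<exists>c. (c * fst h = a \<and> c * fst (snd h) = b) \<or> (c * fst h = a \<and> c * snd (snd h) = d)
                        \<or> (c * fst (snd h) = b \<and> c * snd (snd h) = d)"
    by (intro bexI[of _ h]) auto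
qed

lemma covers_in_two_coords_rotate:
  "covers_in_two_coords H x y z \<Longrightarrow> covers_in_two_coords H y z x"
  unfolding covers_in_two_coords_def by metis

lemma covers_in_two_coords_swap:
  "covers_in_two_coords H x y z \<Longrightarrow> covers_in_two_coords H x z y"
  unfolding covers_in_two_coords_def by metis

lemma slope_in_slopes:
  fixes x y :: "'b \<Rightarrow> 'a::field"
  assumes "h \<in> H" "c * x h = a" "c * y h = b" "a \<noteq> 0" "b \<noteq> 0"
  shows "b / a \<in> slopes H x y"
proof -
  have "c \<noteq> 0" "x h \<noteq> 0" "y h \<noteq> 0"
    using assms by auto
  then have "b / a = y h / x h"
    using assms(2,3) by auto
  with assms(1) \<open>x h \<noteq> 0\<close> \<open>y h \<noteq> 0\<close> show ?thesis
    unfolding slopes_def by blast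
qed

lemma card_slopes_le:
  "finite H \<Longrightarrow> card (slopes H x y) \<le> card {h \<in> H. x h \<noteq> 0 \<and> y h \<noteq> 0}"
  unfolding slopes_def by (rule card_image_le) simp

lemma card_slopes_le_card:
  "finite H \<Longrightarrow> card (slopes H x y) \<le> card H"
  by (rule order_trans[OF card_slopes_le]) (auto intro: card_mono)

text \<open>The point (1, s, s u) is covered through one of its three coordinate pairs.\<close>

lemma covers_in_two_coords_slopes:
  fixes x y z :: "'b \<Rightarrow> 'a::field"
  assumes "covers_in_two_coords H x y z" "s \<noteq> 0" "u \<noteq> 0"
  shows "s \<in> slopes H x y \<or> u \<in> slopes H y z \<or> s * u \<in> slopes H x z"
proof -
  from assms(1) obtain h c where h: "h \<in> H" and
    "(c * x h = 1 \<and> c * y h = s) \<or> (c * x h = 1 \<and> c * z h = s * u) \<or> (c * y h = s \<and> c * z h = s * u)"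
    unfolding covers_in_two_coords_def by blast
  then consider "c * x h = 1" "c * y h = s" | "c * x h = 1" "c * z h = s * u"
    | "c * y h = s" "c * z h = s * u"
    by blast
  then show ?thesis
  proof cases
    case 1
    then show ?thesis using slope_in_slopes[where x = x and y = y, OF h 1] assms(2) by simp
  next
    case 2
    then show ?thesis using slope_in_slopes[where x = x and y = z, OF h 2] assms(2,3) by simp
  next
    case 3
    then show ?thesis using slope_in_slopes[where x = y and y = z, OF h 3] assms(2,3) by simp
  qed
qed

lemma exists_nonzero_notin:
  fixes X :: "'a::{field,finite} set"
  assumes "card X < card (UNIV - {0::'a})"
  shows "\<exists>s. s \<noteq> 0 \<and> s \<notin> X"
proof (rule ccontr)
  assume "\<not> ?thesis"
  then have "card (UNIV - {0::'a}) \<le> card X"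
    by (intro card_mono) auto
  with assms show False
    by simp
qed

text \<open>Unless some vector of H lies on a coordinate plane without being zero there, the points
  (1, s, 0) force every nonzero s to be a slope.\<close>

lemma covers_in_two_coords_plane_vector:
  fixes x y z :: "'b \<Rightarrow> 'a::{field,finite}"
  assumes "covers_in_two_coords H x y z" "card (slopes H x y) < card (UNIV - {0::'a})"
  shows "\<exists>h\<in>H. z h = 0 \<and> (x h \<noteq> 0 \<or> y h \<noteq> 0)"
proof (rule ccontr)
  assume no_plane: "\<not> ?thesis"
  obtain s :: 'a where "s \<noteq> 0" "s \<notin> slopes H x y"
    using exists_nonzero_notin[OF assms(2)] by blast
  moreover from assms(1) obtain h c where h: "h \<in> H" and
    "(c * x h = 1 \<and> c * y h = s) \<or> (c * x h = 1 \<and> c * z h = 0) \<or> (c * y h = s \<and> c * z h = 0)"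
    unfolding covers_in_two_coords_def by blast
  ultimately consider "c * x h = 1" "c * y h = s" | "c * x h = 1" "c * z h = 0"
    | "c * y h = s" "c * z h = 0"
    by blast
  then show False
  proof cases
    case 1
    then show False
      using slope_in_slopes[where x = x and y = y, OF h 1] \<open>s \<noteq> 0\<close> \<open>s \<notin> slopes H x y\<close>
      by simp
  next
    case 2
    then show False using no_plane h by auto
  next
    case 3
    then show False using no_plane h \<open>s \<noteq> 0\<close> by auto
  qed
qed

lemma card_some_zero_coord_ge_2:
  fixes x y z :: "'b \<Rightarrow> 'a::{field,finite}"
  assumes "covers_in_two_coords H x y z" "finite H" "card H < card (UNIV - {0::'a})"
  shows "2 \<le> card {h \<in> H. x h = 0 \<or> y h = 0 \<or> z h = 0}"
proof -
  have small: "card (slopes H v w) < card (UNIV - {0::'a})" for v w :: "'b \<Rightarrow> 'a"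
    using card_slopes_le_card[OF assms(2)] assms(3) by (rule le_less_trans)
  obtain g3 where g3: "g3 \<in> H" "z g3 = 0" "x g3 \<noteq> 0 \<or> y g3 \<noteq> 0"
    using covers_in_two_coords_plane_vector[OF assms(1) small] by blast
  obtain g2 where g2: "g2 \<in> H" "y g2 = 0" "x g2 \<noteq> 0 \<or> z g2 \<noteq> 0"
    using covers_in_two_coords_plane_vector[OF covers_in_two_coords_swap[OF assms(1)] small] by blast
  obtain g1 where g1: "g1 \<in> H" "x g1 = 0" "y g1 \<noteq> 0 \<or> z g1 \<noteq> 0"
    using covers_in_two_coords_plane_vector[OF covers_in_two_coords_rotate[OF assms(1)] small] by blast
  let ?Z = "{h \<in> H. x h = 0 \<or> y h = 0 \<or> z h = 0}"
  have "g1 \<noteq> g2 \<or> g1 \<noteq> g3"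
    using g1 g2 g3 by auto
  with g1 g2 g3 obtain g g' where "g \<in> ?Z" "g' \<in> ?Z" "g \<noteq> g'"
    by blast
  then have "{g, g'} \<subseteq> ?Z" "card {g, g'} = 2"
    by auto
  moreover have "finite ?Z"
    using assms(2) by simp
  ultimately show ?thesis
    by (metis card_mono)
qed

text \<open>Each vector of H with all coordinates nonzero contributes to all three slope sets, one
  with a zero coordinate to at most one.\<close>

lemma card_nonzero_pairs_le:
  fixes x y z :: "'b \<Rightarrow> 'a::zero"
  assumes "finite H"
  shows "card {h \<in> H. x h \<noteq> 0 \<and> y h \<noteq> 0} + card {h \<in> H. x h \<noteq> 0 \<and> z h \<noteq> 0}
           + card {h \<in> H. y h \<noteq> 0 \<and> z h \<noteq> 0} + 2 * card {h \<in> H. x h = 0 \<or> y h = 0 \<or> z h = 0}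
         \<le> 3 * card H"
proof -
  have card_filter: "card {h \<in> H. P h} = (\<Sum>h\<in>H. of_bool (P h))" for P
    using assms by (simp add: Collect_conj_eq Int_commute)
  have "(\<Sum>h\<in>H. of_bool (x h \<noteq> 0 \<and> y h \<noteq> 0) + of_bool (x h \<noteq> 0 \<and> z h \<noteq> 0)
          + of_bool (y h \<noteq> 0 \<and> z h \<noteq> 0) + 2 * of_bool (x h = 0 \<or> y h = 0 \<or> z h = 0))
        \<le> (\<Sum>h\<in>H. 3::nat)"
    by (rule sum_mono) auto
  then show ?thesis
    by (simp add: card_filter sum.distrib sum_distrib_left)
qed

lemma exists_nonzero_avoiding_left:
  fixes A B C :: "'a::{field,finite} set"
  assumes "card A < card (UNIV - {0::'a})" "card B + card C < card (UNIV - {0::'a})"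
  shows "\<exists>s u. s \<noteq> 0 \<and> u \<noteq> 0 \<and> s \<notin> A \<and> u \<notin> C \<and> s * u \<notin> B"
proof -
  obtain s where s: "s \<noteq> 0" "s \<notin> A"
    using exists_nonzero_notin[OF assms(1)] by blast
  have "card (C \<union> (\<lambda>b. b / s) ` B) < card (UNIV - {0::'a})"
    using assms(2) card_Un_le[of C "(\<lambda>b. b / s) ` B"] card_image_le[OF finite, of "\<lambda>b. b / s" B]
    by linarith
  then obtain u where u: "u \<noteq> 0" "u \<notin> C \<union> (\<lambda>b. b / s) ` B"
    using exists_nonzero_notin by blast
  have "s * u \<notin> B"
  proof
    assume "s * u \<in> B"
    then have "s * u / s \<in> (\<lambda>b. b / s) ` B" by blast
    with u s show False by simp
  qed
  with s u show ?thesis by blast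
qed

lemma exists_nonzero_avoiding_middle:
  fixes A B C :: "'a::{field,finite} set"
  assumes "card B < card (UNIV - {0::'a})" "card A + card C < card (UNIV - {0::'a})"
  shows "\<exists>s u. s \<noteq> 0 \<and> u \<noteq> 0 \<and> s \<notin> A \<and> u \<notin> C \<and> s * u \<notin> B"
proof -
  obtain t where t: "t \<noteq> 0" "t \<notin> B"
    using exists_nonzero_notin[OF assms(1)] by blast
  have "card (A \<union> (\<lambda>c. t / c) ` C) < card (UNIV - {0::'a})"
    using assms(2) card_Un_le[of A "(\<lambda>c. t / c) ` C"] card_image_le[OF finite, of "\<lambda>c. t / c" C]
    by linarith
  then obtain s where s: "s \<noteq> 0" "s \<notin> A \<union> (\<lambda>c. t / c) ` C"
    using exists_nonzero_notin by blast
  have "t / s \<notin> C"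
  proof
    assume "t / s \<in> C"
    then have "t / (t / s) \<in> (\<lambda>c. t / c) ` C" by blast
    with t s show False by simp
  qed
  moreover have "s * (t / s) = t"
    using s by simp
  ultimately show ?thesis
    using s t by (intro exI[of _ s] exI[of _ "t / s"]) auto
qed

lemma exists_nonzero_avoiding:
  fixes A B C :: "'a::{field,finite} set"
  assumes "card A < card (UNIV - {0::'a})" "card B < card (UNIV - {0::'a})"
    and "card C < card (UNIV - {0::'a})"
    and "2 * (card A + card B + card C) < 3 * card (UNIV - {0::'a})"
  shows "\<exists>s u. s \<noteq> 0 \<and> u \<noteq> 0 \<and> s \<notin> A \<and> u \<notin> C \<and> s * u \<notin> B"
proof (cases "card B + card C < card (UNIV - {0::'a})")
  case True
  with assms(1) show ?thesis by (rule exists_nonzero_avoiding_left)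
next
  case False
  show ?thesis
  proof (cases "card A + card C < card (UNIV - {0::'a})")
    case True
    with assms(2) show ?thesis by (rule exists_nonzero_avoiding_middle)
  next
    case False
    with \<open>\<not> card B + card C < card (UNIV - {0::'a})\<close> assms(4)
    have "card B + card A < card (UNIV - {0::'a})"
      by (simp add: not_less)
    then obtain s u where "s \<noteq> 0" "u \<noteq> 0" "s \<notin> C" "u \<notin> A" "s * u \<notin> B"
      using exists_nonzero_avoiding_left[OF assms(3)] by blast
    then show ?thesis
      by (intro exI[of _ u] exI[of _ s]) (simp add: mult.commute)
  qed
qed

theorem short_covering_card_ge:
  fixes H :: "('a::{field,finite} \<times> 'a \<times> 'a) set"
  assumes "short_covering H" "card H < card (UNIV - {0::'a})"
  shows "3 * card (UNIV - {0::'a}) + 8 \<le> 6 * card H"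
proof (rule ccontr)
  assume "\<not> ?thesis"
  define x :: "'a \<times> 'a \<times> 'a \<Rightarrow> 'a" where "x = fst"
  define y :: "'a \<times> 'a \<times> 'a \<Rightarrow> 'a" where "y = (\<lambda>h. fst (snd h))"
  define z :: "'a \<times> 'a \<times> 'a \<Rightarrow> 'a" where "z = (\<lambda>h. snd (snd h))"
  have cov: "covers_in_two_coords H x y z"
    unfolding x_def y_def z_def by (rule short_covering_covers_in_two_coords[OF assms(1)])
  have "finite H" by simp
  have sum: "card (slopes H x y) + card (slopes H x z) + card (slopes H y z) + 4 \<le> 3 * card H"
    using card_nonzero_pairs_le[OF \<open>finite H\<close>, of x y z]
      card_some_zero_coord_ge_2[OF cov \<open>finite H\<close> assms(2)]
      card_slopes_le[OF \<open>finite H\<close>, of x y] card_slopes_le[OF \<open>finite H\<close>, of x z]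
      card_slopes_le[OF \<open>finite H\<close>, of y z]
    by linarith
  have small: "card (slopes H v w) < card (UNIV - {0::'a})" for v w :: "'a \<times> 'a \<times> 'a \<Rightarrow> 'a"
    using card_slopes_le_card[OF \<open>finite H\<close>] assms(2) by (rule le_less_trans)
  from sum \<open>\<not> ?thesis\<close>
  have "2 * (card (slopes H x y) + card (slopes H x z) + card (slopes H y z))
      < 3 * card (UNIV - {0::'a})"
    unfolding distrib_left by linarith
  then obtain s u where "s \<noteq> 0" "u \<noteq> 0"
    and "s \<notin> slopes H x y" "u \<notin> slopes H y z" "s * u \<notin> slopes H x z"
    using exists_nonzero_avoiding[OF small small small] by blast
  with covers_in_two_coords_slopes[OF cov] show False by blast
qed

theorem proposition20:
  fixes H :: "('a::{field,finite} \<times> 'a \<times> 'a) set"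
  assumes "card (UNIV :: 'a set) = 9"
    and "short_covering H"
  shows "card H \<ge> 6"
proof (rule ccontr)
  assume "\<not> card H \<ge> 6"
  moreover have "card (UNIV - {0::'a}) = 8"
    using assms(1) by (simp add: card_Diff_singleton)
  ultimately show False
    using short_covering_card_ge[OF assms(2)] by simp
qed

end
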